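(* For any graph $G$ with no isolated vertex, order $n$ and maximum degree $\Delta$, $$\left\lceil\frac{2n+\gamma_t(G)}{\Delta+1}\right\rceil\le\gamma_{(2,2,1)}(G)\le\min\{3\gamma(G),2\gamma_t(G)\}.$$ Furthermore, if $G$ has minimum degree $\delta\ge2$, then $\gamma_{(2,2,1)}(G)\le\gamma_{\times2,t}(G)$.
   Context: All graphs are finite and simple; $N(v)$ is the open neighbourhood. $\gamma_{(2,2,1)}(G)$ is the minimum of $\sum_v f(v)$ over functions $f:V(G)\to\{0,1,2\}$ such that $\sum_{u\in N(v)}f(u)\ge 2$ whenever $f(v)\in\{0,1\}$ and $\sum_{u\in N(v)}f(u)\ge1$ whenever $f(v)=2$. $\gamma(G)$ is the domination number, $\gamma_t(G)$ the total domination number (minimum size of $S$ such that every vertex has a neighbour in $S$), and $\gamma_{\times2,t}(G)$ the minimum size of $S\subseteq V(G)$ such that every vertex has at least two neighbours in $S$. *)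

theory Defs
  imports Complex_Main
begin

definition simple_graph :: "'a set \<Rightarrow> ('a \<Rightarrow> 'a \<Rightarrow> bool) \<Rightarrow> bool" where
  "simple_graph V E \<longleftrightarrow> finite V \<and> V \<noteq> {} \<and>
     (\<forall>u v. E u v \<longrightarrow> u \<in> V \<and> v \<in> V) \<and>
     (\<forall>u v. E u v \<longrightarrow> E v u) \<and> (\<forall>v. \<not> E v v)"

definition nbhd :: "'a set \<Rightarrow> ('a \<Rightarrow> 'a \<Rightarrow> bool) \<Rightarrow> 'a \<Rightarrow> 'a set" where
  "nbhd V E v = {u \<in> V. E v u}"

definition degree :: "'a set \<Rightarrow> ('a \<Rightarrow> 'a \<Rightarrow> bool) \<Rightarrow> 'a \<Rightarrow> nat" where
  "degree V E v = card (nbhd V E v)"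

definition max_degree :: "'a set \<Rightarrow> ('a \<Rightarrow> 'a \<Rightarrow> bool) \<Rightarrow> nat" where
  "max_degree V E = Max (degree V E ` V)"

definition min_degree :: "'a set \<Rightarrow> ('a \<Rightarrow> 'a \<Rightarrow> bool) \<Rightarrow> nat" where
  "min_degree V E = Min (degree V E ` V)"

definition no_isolated :: "'a set \<Rightarrow> ('a \<Rightarrow> 'a \<Rightarrow> bool) \<Rightarrow> bool" where
  "no_isolated V E \<longleftrightarrow> (\<forall>v\<in>V. nbhd V E v \<noteq> {})"

definition dominating :: "'a set \<Rightarrow> ('a \<Rightarrow> 'a \<Rightarrow> bool) \<Rightarrow> 'a set \<Rightarrow> bool" where
  "dominating V E S \<longleftrightarrow> S \<subseteq> V \<and> (\<forall>v\<in>V. v \<in> S \<or> nbhd V E v \<inter> S \<noteq> {})"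

definition domination_number :: "'a set \<Rightarrow> ('a \<Rightarrow> 'a \<Rightarrow> bool) \<Rightarrow> nat" where
  "domination_number V E = (LEAST k. \<exists>S. dominating V E S \<and> card S = k)"

definition total_dominating :: "'a set \<Rightarrow> ('a \<Rightarrow> 'a \<Rightarrow> bool) \<Rightarrow> 'a set \<Rightarrow> bool" where
  "total_dominating V E S \<longleftrightarrow> S \<subseteq> V \<and> (\<forall>v\<in>V. nbhd V E v \<inter> S \<noteq> {})"

definition total_domination_number :: "'a set \<Rightarrow> ('a \<Rightarrow> 'a \<Rightarrow> bool) \<Rightarrow> nat" where
  "total_domination_number V E = (LEAST k. \<exists>S. total_dominating V E S \<and> card S = k)"

definition double_total_dominating :: "'a set \<Rightarrow> ('a \<Rightarrow> 'a \<Rightarrow> bool) \<Rightarrow> 'a set \<Rightarrow> bool" where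
  "double_total_dominating V E S \<longleftrightarrow> S \<subseteq> V \<and> (\<forall>v\<in>V. card (nbhd V E v \<inter> S) \<ge> 2)"

definition double_total_domination_number :: "'a set \<Rightarrow> ('a \<Rightarrow> 'a \<Rightarrow> bool) \<Rightarrow> nat" where
  "double_total_domination_number V E =
     (LEAST k. \<exists>S. double_total_dominating V E S \<and> card S = k)"

definition dom221_function :: "'a set \<Rightarrow> ('a \<Rightarrow> 'a \<Rightarrow> bool) \<Rightarrow> ('a \<Rightarrow> nat) \<Rightarrow> bool" where
  "dom221_function V E f \<longleftrightarrow> (\<forall>v. v \<notin> V \<longrightarrow> f v = 0) \<and> (\<forall>v\<in>V. f v \<le> 2) \<and>
     (\<forall>v\<in>V. f v \<le> 1 \<longrightarrow> (\<Sum>u\<in>nbhd V E v. f u) \<ge> 2) \<and>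
     (\<forall>v\<in>V. f v = 2 \<longrightarrow> (\<Sum>u\<in>nbhd V E v. f u) \<ge> 1)"

definition gamma221 :: "'a set \<Rightarrow> ('a \<Rightarrow> 'a \<Rightarrow> bool) \<Rightarrow> nat" where
  "gamma221 V E = (LEAST k. \<exists>f. dom221_function V E f \<and> (\<Sum>v\<in>V. f v) = k)"

end

theory Submission
  imports Defs
begin

(* Lower bound: let f be a (2,2,1)-domination function of weight w, let V\<^sub>2 = {v. f v = 2}
  and let T be the support of f. Every vertex v receives at least 2 - [f v = 2] from its
  neighbours, and every vertex u sends f u to each of its at most \<Delta> neighbours, so
  2n \<le> \<Delta> w + |V\<^sub>2|. Moreover w = |T| + |V\<^sub>2| and T is a total dominating set, so
  2n + \<gamma>\<^sub>t \<le> (\<Delta> + 1) w.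
  Upper bounds: 2 on a total dominating set; 2 on a dominating set S plus 1 on one chosen
  neighbour of each vertex of S; 1 on a double total dominating set. *)

lemma finite_nbhd: "simple_graph V E \<Longrightarrow> finite (nbhd V E v)"
  unfolding simple_graph_def nbhd_def by auto

lemma nbhd_subset: "nbhd V E v \<subseteq> V"
  unfolding nbhd_def by auto

lemma le_sum_nbhd:
  "simple_graph V E \<Longrightarrow> u \<in> nbhd V E v \<Longrightarrow> (f u :: nat) \<le> (\<Sum>w\<in>nbhd V E v. f w)"
  using finite_nbhd by (intro member_le_sum) auto

lemma degree_le_max_degree: "simple_graph V E \<Longrightarrow> v \<in> V \<Longrightarrow> degree V E v \<le> max_degree V E"
  unfolding max_degree_def simple_graph_def by (intro Max_ge) auto

lemma min_degree_le_degree: "simple_graph V E \<Longrightarrow> v \<in> V \<Longrightarrow> min_degree V E \<le> degree V E v"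
  unfolding min_degree_def simple_graph_def by (intro Min_le) auto

lemma sum_sum_nbhd_eq_sum_degree:
  assumes "simple_graph V E"
  shows "(\<Sum>v\<in>V. \<Sum>u\<in>nbhd V E v. f u) = (\<Sum>u\<in>V. f u * degree V E u)"
proof -
  have fin: "finite V" and sym: "\<And>u v. E u v = E v u"
    using assms unfolding simple_graph_def by blast+
  have "(\<Sum>v\<in>V. \<Sum>u\<in>nbhd V E v. f u) = (\<Sum>v\<in>V. \<Sum>u\<in>V. if E v u then f u else 0)"
    unfolding nbhd_def by (simp add: sum.inter_filter[OF fin])
  also have "\<dots> = (\<Sum>u\<in>V. \<Sum>v\<in>V. if E v u then f u else 0)"
    by (rule sum.swap)
  also have "\<dots> = (\<Sum>u\<in>V. \<Sum>v\<in>{v\<in>V. E v u}. f u)"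
    by (simp only: sum.inter_filter[OF fin])
  also have "\<dots> = (\<Sum>u\<in>V. \<Sum>v\<in>nbhd V E u. f u)"
    using sym unfolding nbhd_def by simp
  finally show ?thesis
    by (simp add: degree_def mult.commute)
qed

lemma sum_sum_nbhd_le_max_degree:
  assumes "simple_graph V E"
  shows "(\<Sum>v\<in>V. \<Sum>u\<in>nbhd V E v. f u) \<le> max_degree V E * (\<Sum>u\<in>V. f u)"
proof -
  have "(\<Sum>v\<in>V. \<Sum>u\<in>nbhd V E v. f u) = (\<Sum>u\<in>V. f u * degree V E u)"
    using assms by (rule sum_sum_nbhd_eq_sum_degree)
  also have "\<dots> \<le> (\<Sum>u\<in>V. max_degree V E * f u)"
    using assms by (intro sum_mono) (simp add: degree_le_max_degree)
  finally show ?thesis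
    by (simp add: sum_distrib_left)
qed

lemma total_dominating_vertex_set:
  "no_isolated V E \<Longrightarrow> total_dominating V E V"
  unfolding no_isolated_def total_dominating_def using nbhd_subset by (metis Int_absorb2 order_refl)

lemma double_total_dominating_vertex_set:
  assumes "simple_graph V E" "min_degree V E \<ge> 2"
  shows "double_total_dominating V E V"
  using min_degree_le_degree[OF assms(1)] assms(2) nbhd_subset
  unfolding double_total_dominating_def degree_def by (metis Int_absorb2 order.trans order_refl)

lemma Least_card_attained:
  assumes "P S"
  obtains T where "P T" "card T = (LEAST k. \<exists>T. P T \<and> card T = k)"
  using LeastI_ex[of "\<lambda>k. \<exists>T. P T \<and> card T = k"] assms by blast

lemma dom221_function_le_2: "dom221_function V E f \<Longrightarrow> v \<in> V \<Longrightarrow> f v \<le> 2"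
  unfolding dom221_function_def by blast

lemma dom221_function_two_le_nbhd_sum:
  assumes "dom221_function V E f" "v \<in> V"
  shows "2 \<le> (\<Sum>u\<in>nbhd V E v. f u) + of_bool (f v = 2)"
  using assms dom221_function_le_2[OF assms] unfolding dom221_function_def
  by (cases "f v \<le> 1") auto

lemma dom221_function_support_total_dominating:
  assumes "dom221_function V E f"
  shows "total_dominating V E {v\<in>V. f v > 0}"
  unfolding total_dominating_def
proof (intro conjI ballI)
  fix v assume "v \<in> V"
  have "(\<Sum>u\<in>nbhd V E v. f u) \<noteq> 0"
    using dom221_function_two_le_nbhd_sum[OF assms \<open>v \<in> V\<close>] by (cases "f v = 2") auto
  then obtain u where "u \<in> nbhd V E v" "f u \<noteq> 0"
    by (meson sum.neutral)
  then show "nbhd V E v \<inter> {v \<in> V. 0 < f v} \<noteq> {}"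
    unfolding nbhd_def by auto
qed auto

lemma dom221_function_weight_eq:
  assumes "simple_graph V E" "dom221_function V E f"
  shows "(\<Sum>v\<in>V. f v) = card {v\<in>V. f v > 0} + card {v\<in>V. f v = 2}"
proof -
  have fin: "finite V"
    using assms(1) unfolding simple_graph_def by blast
  have "f v = of_bool (f v > 0) + of_bool (f v = 2)" if "v \<in> V" for v
    using dom221_function_le_2[OF assms(2) that] by (cases "f v = 2") auto
  then have "(\<Sum>v\<in>V. f v) = (\<Sum>v\<in>V. of_bool (f v > 0) + of_bool (f v = 2))"
    by (intro sum.cong refl)
  also have "\<dots> = card {v\<in>V. f v > 0} + card {v\<in>V. f v = 2}"
    using fin by (simp add: sum.distrib Collect_conj_eq Int_commute)
  finally show ?thesis .
qed

lemma gamma221_le: "dom221_function V E f \<Longrightarrow> gamma221 V E \<le> (\<Sum>v\<in>V. f v)"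
  unfolding gamma221_def by (intro Least_le) blast

lemma gamma221_attained:
  assumes "simple_graph V E" "no_isolated V E"
  obtains f where "dom221_function V E f" "(\<Sum>v\<in>V. f v) = gamma221 V E"
proof -
  define f :: "'a \<Rightarrow> nat" where "f v = 2 * of_bool (v \<in> V)" for v
  have "dom221_function V E f"
    unfolding dom221_function_def
  proof (intro conjI allI ballI impI)
    fix v assume "v \<in> V"
    then obtain u where "u \<in> nbhd V E v"
      using assms(2) unfolding no_isolated_def by blast
    moreover have "f u = 2"
      using \<open>u \<in> nbhd V E v\<close> nbhd_subset[of V E v] unfolding f_def by auto
    ultimately show "2 \<le> (\<Sum>u\<in>nbhd V E v. f u)" "1 \<le> (\<Sum>u\<in>nbhd V E v. f u)"
      using le_sum_nbhd[OF assms(1), of u v f] by auto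
  qed (auto simp: f_def)
  then show thesis
    using LeastI_ex[of "\<lambda>k. \<exists>f. dom221_function V E f \<and> (\<Sum>v\<in>V. f v) = k"] that
    unfolding gamma221_def by blast
qed

lemma dom221_function_weight_lower_bound:
  assumes "simple_graph V E" "dom221_function V E f"
  shows "2 * card V + total_domination_number V E \<le> (max_degree V E + 1) * (\<Sum>v\<in>V. f v)"
proof -
  have "(\<Sum>v\<in>V. 2) \<le> (\<Sum>v\<in>V. (\<Sum>u\<in>nbhd V E v. f u) + of_bool (f v = 2))"
    by (rule sum_mono) (rule dom221_function_two_le_nbhd_sum[OF assms(2)])
  then have "2 * card V \<le> (\<Sum>v\<in>V. (\<Sum>u\<in>nbhd V E v. f u) + of_bool (f v = 2))"
    by (simp add: mult.commute)
  also have "\<dots> \<le> max_degree V E * (\<Sum>v\<in>V. f v) + card {v\<in>V. f v = 2}"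
    using sum_sum_nbhd_le_max_degree[OF assms(1)] assms(1)
    by (simp add: sum.distrib simple_graph_def Collect_conj_eq Int_commute)
  finally have "2 * card V \<le> max_degree V E * (\<Sum>v\<in>V. f v) + card {v\<in>V. f v = 2}" .
  moreover have "total_domination_number V E \<le> card {v\<in>V. f v > 0}"
    unfolding total_domination_number_def
    using dom221_function_support_total_dominating[OF assms(2)] by (intro Least_le) blast
  ultimately show ?thesis
    using dom221_function_weight_eq[OF assms] by simp
qed

lemma gamma221_le_card_total_dominating:
  assumes "simple_graph V E" "total_dominating V E S"
  shows "gamma221 V E \<le> 2 * card S"
proof -
  have SV: "S \<subseteq> V"
    using assms(2) unfolding total_dominating_def by blast
  define f :: "'a \<Rightarrow> nat" where "f v = 2 * of_bool (v \<in> S)" for v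
  have "dom221_function V E f"
    unfolding dom221_function_def
  proof (intro conjI allI ballI impI)
    fix v assume "v \<in> V"
    then obtain u where "u \<in> nbhd V E v" "u \<in> S"
      using assms(2) unfolding total_dominating_def by blast
    then show "2 \<le> (\<Sum>u\<in>nbhd V E v. f u)" "1 \<le> (\<Sum>u\<in>nbhd V E v. f u)"
      using le_sum_nbhd[OF assms(1), of u v f] unfolding f_def by auto
  qed (use SV in \<open>auto simp: f_def\<close>)
  then have "gamma221 V E \<le> (\<Sum>v\<in>V. f v)"
    by (rule gamma221_le)
  also have "\<dots> = 2 * card S"
    using assms(1) SV unfolding f_def simple_graph_def
    by (simp add: sum_distrib_left[symmetric] Int_absorb1)
  finally show ?thesis .
qed

lemma gamma221_le_card_double_total_dominating:
  assumes "simple_graph V E" "double_total_dominating V E S"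
  shows "gamma221 V E \<le> card S"
proof -
  have SV: "S \<subseteq> V"
    using assms(2) unfolding double_total_dominating_def by blast
  define f :: "'a \<Rightarrow> nat" where "f v = of_bool (v \<in> S)" for v
  have "dom221_function V E f"
    unfolding dom221_function_def
  proof (intro conjI allI ballI impI)
    fix v assume "v \<in> V"
    then have "2 \<le> (\<Sum>u\<in>nbhd V E v. f u)"
      using assms unfolding double_total_dominating_def f_def
      by (simp add: finite_nbhd)
    then show "2 \<le> (\<Sum>u\<in>nbhd V E v. f u)" "1 \<le> (\<Sum>u\<in>nbhd V E v. f u)"
      by auto
  qed (use SV in \<open>auto simp: f_def\<close>)
  then have "gamma221 V E \<le> (\<Sum>v\<in>V. f v)"
    by (rule gamma221_le)
  also have "\<dots> = card S"
    using assms(1) SV unfolding f_def simple_graph_def by (simp add: Int_absorb1)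
  finally show ?thesis .
qed

lemma gamma221_le_card_dominating:
  assumes "simple_graph V E" "no_isolated V E" "dominating V E S"
  shows "gamma221 V E \<le> 3 * card S"
proof -
  have fin: "finite V"
    using assms(1) unfolding simple_graph_def by blast
  have SV: "S \<subseteq> V"
    using assms(3) unfolding dominating_def by blast
  have "\<forall>s\<in>S. \<exists>u. u \<in> nbhd V E s"
    using assms(2) SV unfolding no_isolated_def by blast
  then obtain nb where nb: "\<And>s. s \<in> S \<Longrightarrow> nb s \<in> nbhd V E s"
    by metis
  define T where "T = nb ` S"
  have TV: "T \<subseteq> V"
    using nb unfolding T_def nbhd_def by auto
  define f :: "'a \<Rightarrow> nat" where "f v = (if v \<in> S then 2 else if v \<in> T then 1 else 0)" for v
  have "dom221_function V E f"
    unfolding dom221_function_def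
  proof (intro conjI allI ballI impI)
    fix v assume "v \<in> V" "f v \<le> 1"
    then have "v \<notin> S"
      by (simp add: f_def split: if_splits)
    with \<open>v \<in> V\<close> obtain u where u: "u \<in> nbhd V E v" "u \<in> S"
      using assms(3) unfolding dominating_def by blast
    then have "f u = 2"
      by (simp add: f_def)
    then show "2 \<le> (\<Sum>u\<in>nbhd V E v. f u)"
      using le_sum_nbhd[OF assms(1) u(1), of f] by simp
  next
    fix v assume "v \<in> V" "f v = 2"
    then have "v \<in> S"
      by (simp add: f_def split: if_splits)
    then have "nb v \<in> nbhd V E v" "1 \<le> f (nb v)"
      using nb by (simp_all add: f_def T_def)
    then show "1 \<le> (\<Sum>u\<in>nbhd V E v. f u)"
      using le_sum_nbhd[OF assms(1), of "nb v" v f] by simp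
  qed (use SV TV in \<open>auto simp: f_def\<close>)
  then have "gamma221 V E \<le> (\<Sum>v\<in>V. f v)"
    by (rule gamma221_le)
  also have "\<dots> \<le> (\<Sum>v\<in>V. 2 * of_bool (v \<in> S) + of_bool (v \<in> T))"
    by (intro sum_mono) (simp add: f_def)
  also have "\<dots> = 2 * card S + card T"
    using fin SV TV by (simp add: sum.distrib sum_distrib_left[symmetric] Int_absorb1)
  also have "\<dots> \<le> 3 * card S"
    unfolding T_def using card_image_le[OF finite_subset[OF SV fin], of nb] by simp
  finally show ?thesis .
qed

lemma gamma221_lower_bound:
  assumes "simple_graph V E" "no_isolated V E"
  shows "2 * card V + total_domination_number V E \<le> (max_degree V E + 1) * gamma221 V E"
proof -
  obtain f where "dom221_function V E f" "(\<Sum>v\<in>V. f v) = gamma221 V E"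
    using gamma221_attained[OF assms] .
  then show ?thesis
    using dom221_function_weight_lower_bound[OF assms(1)] by metis
qed

lemma gamma221_le_domination_number:
  assumes "simple_graph V E" "no_isolated V E"
  shows "gamma221 V E \<le> 3 * domination_number V E"
proof -
  have "dominating V E V"
    by (simp add: dominating_def)
  then obtain S where "dominating V E S" "card S = domination_number V E"
    using Least_card_attained unfolding domination_number_def by metis
  then show ?thesis
    using gamma221_le_card_dominating[OF assms] by metis
qed

lemma gamma221_le_total_domination_number:
  assumes "simple_graph V E" "no_isolated V E"
  shows "gamma221 V E \<le> 2 * total_domination_number V E"
proof -
  obtain S where "total_dominating V E S" "card S = total_domination_number V E"
    using Least_card_attained total_dominating_vertex_set[OF assms(2)]
    unfolding total_domination_number_def by metis
  then show ?thesis
    using gamma221_le_card_total_dominating[OF assms(1)] by metis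
qed

lemma gamma221_le_double_total_domination_number:
  assumes "simple_graph V E" "min_degree V E \<ge> 2"
  shows "gamma221 V E \<le> double_total_domination_number V E"
proof -
  obtain S where "double_total_dominating V E S" "card S = double_total_domination_number V E"
    using Least_card_attained double_total_dominating_vertex_set[OF assms]
    unfolding double_total_domination_number_def by metis
  then show ?thesis
    using gamma221_le_card_double_total_dominating[OF assms(1)] by metis
qed

theorem theorem23:
  fixes V :: "'a set" and E :: "'a \<Rightarrow> 'a \<Rightarrow> bool"
  assumes "simple_graph V E" and "no_isolated V E"
  shows "(\<lceil>(2 * real (card V) + real (total_domination_number V E)) / (real (max_degree V E) + 1)\<rceil>
           \<le> int (gamma221 V E)) \<and>
         gamma221 V E \<le> min (3 * domination_number V E) (2 * total_domination_number V E) \<and>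
         (min_degree V E \<ge> 2 \<longrightarrow> gamma221 V E \<le> double_total_domination_number V E)"
proof -
  have "real (2 * card V + total_domination_number V E)
      \<le> real ((max_degree V E + 1) * gamma221 V E)"
    using gamma221_lower_bound[OF assms] by (rule of_nat_mono)
  then have "\<lceil>(2 * real (card V) + real (total_domination_number V E))
      / (real (max_degree V E) + 1)\<rceil> \<le> int (gamma221 V E)"
    by (simp add: ceiling_le_iff divide_le_eq algebra_simps)
  then show ?thesis
    using gamma221_le_domination_number[OF assms] gamma221_le_total_domination_number[OF assms]
      gamma221_le_double_total_domination_number[OF assms(1)] by simp
qed

end
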